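(* Let $f:\mathbb{R}^d\to\mathbb{R}$ be $\beta$-smooth with minimum value $f^\star$, and run AdaSGD (as defined in the context) for $T$ steps with parameters $\eta,\gamma>0$ using a stochastic gradient oracle with bounded affine noise with parameters $\sigma_0,\sigma_1\ge0$. Then, with $G_t=\sqrt{\gamma^2+\sum_{s=1}^t\|g_s\|^2}$, $$\sum_{t=1}^T\frac{\|g_t\|^2}{G_t^2}\le C_1:=\log\Big(1+\frac{2\sigma_0^2T+8(1+\sigma_1^2)(\eta^2\beta^2T^3+\beta\Delta_1T)}{\gamma^2}\Big),$$ where $\Delta_1=f(w_1)-f^\star$.
   Context: $\|\cdot\|$ is the Euclidean norm and $\log$ the base-2 logarithm. $\beta$-smooth: $\|\nabla f(x)-\nabla f(y)\|\le\beta\|x-y\|$. Oracle: queried at $w$, returns random $g(w)$ with $\mathbb{E}[g(w)\mid w]=\nabla f(w)$ and, with probability one, $\|g(w)-\nabla f(w)\|^2\le\sigma_0^2+\sigma_1^2\|\nabla f(w)\|^2$. AdaSGD: arbitrary $w_1$; for $t=1,\dots,T$, $g_t=g(w_t)$, $\eta_t=\eta/\sqrt{\gamma^2+\sum_{s=1}^t\|g_s\|^2}$, $w_{t+1}=w_t-\eta_tg_t$. *)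

theory Defs
  imports "HOL-Analysis.Analysis"
begin

definition has_gradient_everywhere :: "('a::euclidean_space \<Rightarrow> real) \<Rightarrow> ('a \<Rightarrow> 'a) \<Rightarrow> bool" where
  "has_gradient_everywhere f f' \<longleftrightarrow> (\<forall>x. (f has_derivative (\<lambda>h. f' x \<bullet> h)) (at x))"

definition beta_smooth :: "real \<Rightarrow> ('a::euclidean_space \<Rightarrow> real) \<Rightarrow> ('a \<Rightarrow> 'a) \<Rightarrow> bool" where
  "beta_smooth \<beta> f f' \<longleftrightarrow> has_gradient_everywhere f f' \<and>
     (\<forall>x y. norm (f' x - f' y) \<le> \<beta> * norm (x - y))"

definition adasgd_G :: "real \<Rightarrow> (nat \<Rightarrow> 'a::real_normed_vector) \<Rightarrow> nat \<Rightarrow> real" where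
  "adasgd_G \<gamma> g t = sqrt (\<gamma>\<^sup>2 + (\<Sum>s=1..t. (norm (g s))\<^sup>2))"

definition adasgd_run :: "real \<Rightarrow> real \<Rightarrow> nat \<Rightarrow> (nat \<Rightarrow> 'a::real_normed_vector) \<Rightarrow> (nat \<Rightarrow> 'a) \<Rightarrow> bool" where
  "adasgd_run \<eta> \<gamma> T w g \<longleftrightarrow>
     (\<forall>t\<in>{1..T}. w (Suc t) = w t - (\<eta> / adasgd_G \<gamma> g t) *\<^sub>R g t)"

text \<open>Bounded affine noise, holding for the realised oracle outputs g_t = g(w_t).\<close>
definition affine_noise_bound :: "real \<Rightarrow> real \<Rightarrow> ('a::real_normed_vector \<Rightarrow> 'a) \<Rightarrow> nat \<Rightarrow> (nat \<Rightarrow> 'a) \<Rightarrow> (nat \<Rightarrow> 'a) \<Rightarrow> bool" where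
  "affine_noise_bound \<sigma>0 \<sigma>1 f' T w g \<longleftrightarrow>
     (\<forall>t\<in>{1..T}. (norm (g t - f' (w t)))\<^sup>2 \<le> \<sigma>0\<^sup>2 + \<sigma>1\<^sup>2 * (norm (f' (w t)))\<^sup>2)"

end

theory Submission
  imports Defs
begin

text \<open>Since G_t^2 = \<gamma>^2 + \<Sum>_{s\<le>t} \<parallel>g_s\<parallel>^2, the inequality ln x \<le> x - 1 gives
  \<parallel>g_t\<parallel>^2 / G_t^2 \<le> ln G_t^2 - ln G_{t-1}^2, so the sum telescopes to ln (1 + \<Sum>_t \<parallel>g_t\<parallel>^2 / \<gamma>^2).
  It remains to bound each \<parallel>g_t\<parallel>^2: every normalised step has length at most \<eta>, so
  \<parallel>w_t - w_1\<parallel> \<le> \<eta> T; smoothness together with \<parallel>\<nabla>f(w_1)\<parallel>^2 \<le> 2 \<beta> \<Delta>_1 then gives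
  \<parallel>\<nabla>f(w_t)\<parallel>^2 \<le> 4 \<beta> \<Delta>_1 + 2 \<beta>^2 \<eta>^2 T^2, and the affine noise bound transfers this to g_t.\<close>

lemma norm_add_sq_le:
  fixes x y :: "'a::real_normed_vector"
  shows "(norm (x + y))\<^sup>2 \<le> 2 * (norm x)\<^sup>2 + 2 * (norm y)\<^sup>2"
proof -
  have "norm (x + y) \<le> norm x + norm y" by (rule norm_triangle_ineq)
  then have "(norm (x + y))\<^sup>2 \<le> (norm x + norm y)\<^sup>2" by (simp add: power_mono)
  also have "\<dots> \<le> 2 * (norm x)\<^sup>2 + 2 * (norm y)\<^sup>2"
    using sum_squares_bound[of "norm x" "norm y"] by (simp add: power2_sum)
  finally show ?thesis .
qed

lemma ln_le_log_2:
  assumes "1 \<le> x"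
  shows "ln x \<le> log 2 x"
proof -
  have "0 \<le> ln x" using assms by simp
  then have "ln x \<le> ln x / ln 2"
    using ln_2_less_1 by (simp add: le_divide_eq mult_left_le)
  then show ?thesis by (simp add: log_def)
qed

lemma sum_div_partial_sums_le_ln:
  fixes a :: "nat \<Rightarrow> real"
  assumes c: "c > 0" and a: "\<And>t. a t \<ge> 0"
  shows "(\<Sum>t=1..T. a t / (c + (\<Sum>s=1..t. a s))) \<le> ln (1 + (\<Sum>s=1..T. a s) / c)"
proof -
  have partial_pos: "c + (\<Sum>s=1..t. a s) > 0" for t
    using c a by (simp add: add_pos_nonneg sum_nonneg)
  have telescoped: "(\<Sum>t=1..T. a t / (c + (\<Sum>s=1..t. a s))) \<le> ln (c + (\<Sum>s=1..T. a s)) - ln c"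
  proof (induction T)
    case 0
    then show ?case by simp
  next
    case (Suc T)
    define x where "x = c + (\<Sum>s=1..T. a s)"
    have x: "x > 0" and y: "x + a (Suc T) > 0"
      using partial_pos[of T] partial_pos[of "Suc T"] by (simp_all add: x_def add.assoc)
    have "ln (x / (x + a (Suc T))) \<le> x / (x + a (Suc T)) - 1"
      using x y by (intro ln_le_minus_one) simp
    also have "\<dots> = - a (Suc T) / (x + a (Suc T))"
      using y by (simp add: field_simps)
    finally have "a (Suc T) / (x + a (Suc T)) \<le> ln (x + a (Suc T)) - ln x"
      using x y by (simp add: ln_div)
    then show ?case using Suc.IH by (simp add: x_def add.assoc)
  qed
  have "1 + (\<Sum>s=1..T. a s) / c = (c + (\<Sum>s=1..T. a s)) / c"
    using c by (simp add: field_simps)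
  then have "ln (1 + (\<Sum>s=1..T. a s) / c) = ln (c + (\<Sum>s=1..T. a s)) - ln c"
    using c partial_pos[of T] by (simp add: ln_div)
  with telescoped show ?thesis by simp
qed

lemma norm_diff_le_of_step_bound:
  fixes w :: "nat \<Rightarrow> 'a::real_normed_vector"
  assumes "\<And>t. t \<in> {1..k} \<Longrightarrow> norm (w (Suc t) - w t) \<le> \<eta>"
  shows "norm (w (Suc k) - w 1) \<le> \<eta> * real k"
proof -
  have "w (Suc k) - w 1 = (\<Sum>t=1..k. w (Suc t) - w t)"
    by (simp add: sum_Suc_diff)
  also have "norm \<dots> \<le> real (card {1..k}) * \<eta>"
    using assms by (rule sum_norm_bound)
  finally show ?thesis by (simp add: mult.commute)
qed

lemma beta_smooth_nonneg:
  fixes f :: "'a::euclidean_space \<Rightarrow> real"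
  assumes "beta_smooth \<beta> f f'"
  shows "\<beta> \<ge> 0"
proof -
  obtain b :: 'a where "norm b = 1"
    using norm_some_Basis by blast
  moreover have "norm (f' b - f' 0) \<le> \<beta> * norm (b - 0)"
    using assms unfolding beta_smooth_def by blast
  ultimately show ?thesis
    by (metis diff_zero mult.right_neutral norm_ge_zero order_trans)
qed

lemma beta_smooth_descent:
  fixes f :: "'a::euclidean_space \<Rightarrow> real"
  assumes "beta_smooth \<beta> f f'"
  shows "f (x + h) \<le> f x + f' x \<bullet> h + \<beta> / 2 * (norm h)\<^sup>2"
proof -
  have deriv: "\<And>y. (f has_derivative (\<lambda>v. f' y \<bullet> v)) (at y)"
    and lip: "\<And>a b. norm (f' a - f' b) \<le> \<beta> * norm (a - b)"
    using assms unfolding beta_smooth_def has_gradient_everywhere_def by blast+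
  define \<phi> where "\<phi> t = f (x + t *\<^sub>R h) - t * (f' x \<bullet> h) - \<beta> / 2 * t\<^sup>2 * (norm h)\<^sup>2" for t
  have "\<phi> 1 \<le> \<phi> 0"
  proof (rule DERIV_nonpos_imp_nonincreasing[of 0 1])
    fix t :: real
    assume t: "0 \<le> t" "t \<le> 1"
    have "((\<lambda>t. x + t *\<^sub>R h) has_derivative (\<lambda>s. s *\<^sub>R h)) (at t)"
      by (auto intro!: derivative_eq_intros)
    from has_derivative_compose[OF this deriv]
    have "((\<lambda>t. f (x + t *\<^sub>R h)) has_real_derivative (f' (x + t *\<^sub>R h) \<bullet> h)) (at t)"
      by (rule has_derivative_imp_has_field_derivative) simp
    then have \<phi>_deriv: "(\<phi> has_real_derivative
        (f' (x + t *\<^sub>R h) - f' x) \<bullet> h - \<beta> * t * (norm h)\<^sup>2) (at t)"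
      unfolding \<phi>_def by (auto intro!: derivative_eq_intros simp: inner_diff_left)
    have "(f' (x + t *\<^sub>R h) - f' x) \<bullet> h \<le> norm (f' (x + t *\<^sub>R h) - f' x) * norm h"
      by (rule norm_cauchy_schwarz)
    also have "\<dots> \<le> \<beta> * norm (t *\<^sub>R h) * norm h"
      using lip[of "x + t *\<^sub>R h" x] by (simp add: mult_right_mono)
    also have "\<dots> = \<beta> * t * (norm h)\<^sup>2"
      using t by (simp add: power2_eq_square)
    finally show "\<exists>y. (\<phi> has_real_derivative y) (at t) \<and> y \<le> 0"
      using \<phi>_deriv by force
  qed simp
  then show ?thesis unfolding \<phi>_def by simp
qed

lemma beta_smooth_norm_gradient_sq_le:
  fixes f :: "'a::euclidean_space \<Rightarrow> real"
  assumes smooth: "beta_smooth \<beta> f f'" and fmin: "\<forall>x. fstar \<le> f x"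
  shows "(norm (f' x))\<^sup>2 \<le> 2 * \<beta> * (f x - fstar)"
proof -
  have gradient_step: "fstar \<le> f x - s * (norm (f' x))\<^sup>2 + \<beta> / 2 * s\<^sup>2 * (norm (f' x))\<^sup>2" for s
  proof -
    have "fstar \<le> f (x + (- s) *\<^sub>R f' x)" using fmin by blast
    also have "\<dots> \<le> f x + f' x \<bullet> ((- s) *\<^sub>R f' x) + \<beta> / 2 * (norm ((- s) *\<^sub>R f' x))\<^sup>2"
      by (rule beta_smooth_descent[OF smooth])
    also have "\<dots> = f x - s * (norm (f' x))\<^sup>2 + \<beta> / 2 * s\<^sup>2 * (norm (f' x))\<^sup>2"
      by (simp add: power2_norm_eq_inner power_mult_distrib)
    finally show ?thesis .
  qed
  consider "\<beta> = 0" | "\<beta> > 0"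
    using beta_smooth_nonneg[OF smooth] by linarith
  then show ?thesis
  proof cases
    case 1
    \<comment> \<open>\<open>f\<close> would be unbounded below along \<open>-\<nabla>f(x)\<close> unless the gradient vanishes\<close>
    show ?thesis
    proof (rule ccontr)
      assume "\<not> ?thesis"
      then have "(norm (f' x))\<^sup>2 > 0" using 1 by simp
      moreover have "fstar \<le> f x - ((f x - fstar + 1) / (norm (f' x))\<^sup>2) * (norm (f' x))\<^sup>2"
        using gradient_step[of "(f x - fstar + 1) / (norm (f' x))\<^sup>2"] 1 by simp
      ultimately show False by simp
    qed
  next
    case 2
    have "fstar \<le> f x - (1/\<beta>) * (norm (f' x))\<^sup>2 + \<beta> / 2 * (1/\<beta>)\<^sup>2 * (norm (f' x))\<^sup>2"
      by (rule gradient_step)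
    also have "\<dots> = f x - (norm (f' x))\<^sup>2 / (2 * \<beta>)"
      using 2 by (simp add: power2_eq_square field_simps)
    finally show ?thesis using 2 by (simp add: field_simps)
  qed
qed

lemma beta_smooth_norm_gradient_sq_le_near:
  fixes f :: "'a::euclidean_space \<Rightarrow> real"
  assumes smooth: "beta_smooth \<beta> f f'" and fmin: "\<forall>x. fstar \<le> f x"
    and near: "norm (x - y) \<le> r"
  shows "(norm (f' x))\<^sup>2 \<le> 4 * \<beta> * (f y - fstar) + 2 * (\<beta> * r)\<^sup>2"
proof -
  have "norm (f' x - f' y) \<le> \<beta> * norm (x - y)"
    using smooth unfolding beta_smooth_def by blast
  also have "\<dots> \<le> \<beta> * r"
    using near beta_smooth_nonneg[OF smooth] by (rule mult_left_mono)
  finally have "(norm (f' x - f' y))\<^sup>2 \<le> (\<beta> * r)\<^sup>2"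
    by (simp add: power_mono)
  moreover have "(norm (f' x))\<^sup>2 \<le> 2 * (norm (f' y))\<^sup>2 + 2 * (norm (f' x - f' y))\<^sup>2"
    using norm_add_sq_le[of "f' y" "f' x - f' y"] by simp
  ultimately show ?thesis
    using beta_smooth_norm_gradient_sq_le[OF smooth fmin, of y] by linarith
qed

lemma adasgd_G_nonneg: "adasgd_G \<gamma> g t \<ge> 0"
  unfolding adasgd_G_def by (simp add: sum_nonneg)

lemma adasgd_G_sq: "(adasgd_G \<gamma> g t)\<^sup>2 = \<gamma>\<^sup>2 + (\<Sum>s=1..t. (norm (g s))\<^sup>2)"
  unfolding adasgd_G_def by (simp add: sum_nonneg)

lemma norm_le_adasgd_G:
  assumes "1 \<le> t"
  shows "norm (g t) \<le> adasgd_G \<gamma> g t"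
proof -
  have "(norm (g t))\<^sup>2 \<le> (\<Sum>s=1..t. (norm (g s))\<^sup>2)"
    using assms by (intro member_le_sum) auto
  then have "(norm (g t))\<^sup>2 \<le> (adasgd_G \<gamma> g t)\<^sup>2"
    unfolding adasgd_G_sq using zero_le_power2[of \<gamma>] by linarith
  then show ?thesis
    by (rule power2_le_imp_le) (rule adasgd_G_nonneg)
qed

lemma adasgd_step_norm_le:
  assumes "1 \<le> t" and "\<eta> \<ge> 0"
  shows "norm ((\<eta> / adasgd_G \<gamma> g t) *\<^sub>R g t) \<le> \<eta>"
proof -
  have "norm (g t) / adasgd_G \<gamma> g t \<le> 1"
    using norm_le_adasgd_G[OF assms(1), of g \<gamma>] adasgd_G_nonneg[of \<gamma> g t]
    by (auto simp: divide_le_eq_1)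
  then have "\<eta> * (norm (g t) / adasgd_G \<gamma> g t) \<le> \<eta>"
    using assms(2) by (rule mult_left_le)
  then show ?thesis
    using assms(2) adasgd_G_nonneg[of \<gamma> g t] by simp
qed

lemma adasgd_dist_le:
  assumes run: "adasgd_run \<eta> \<gamma> T w g" and eta: "\<eta> \<ge> 0" and t: "t \<in> {1..T}"
  shows "norm (w t - w 1) \<le> \<eta> * real T"
proof -
  obtain k where k: "t = Suc k" "k < T" using t by (cases t) auto
  have "norm (w (Suc s) - w s) \<le> \<eta>" if "s \<in> {1..k}" for s
    using run that k adasgd_step_norm_le[OF _ eta, of s \<gamma> g]
    unfolding adasgd_run_def by auto
  then have "norm (w t - w 1) \<le> \<eta> * real k"
    unfolding k(1) by (rule norm_diff_le_of_step_bound)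
  also have "\<dots> \<le> \<eta> * real T"
    using k(2) eta by (simp add: mult_left_mono)
  finally show ?thesis .
qed

lemma adasgd_sum_ratio_le_ln:
  assumes "\<gamma> \<noteq> 0"
  shows "(\<Sum>t=1..T. (norm (g t))\<^sup>2 / (adasgd_G \<gamma> g t)\<^sup>2)
    \<le> ln (1 + (\<Sum>s=1..T. (norm (g s))\<^sup>2) / \<gamma>\<^sup>2)"
  unfolding adasgd_G_sq using assms by (intro sum_div_partial_sums_le_ln) auto

lemma norm_sq_le_of_affine_noise:
  assumes "(norm (x - v))\<^sup>2 \<le> \<sigma>0\<^sup>2 + \<sigma>1\<^sup>2 * (norm v)\<^sup>2"
  shows "(norm x)\<^sup>2 \<le> 2 * \<sigma>0\<^sup>2 + 2 * (1 + \<sigma>1\<^sup>2) * (norm v)\<^sup>2"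
  using norm_add_sq_le[of "x - v" v] assms by (simp add: algebra_simps)

lemma adasgd_norm_sq_le:
  fixes f :: "'a::euclidean_space \<Rightarrow> real"
  assumes smooth: "beta_smooth \<beta> f f'" and fmin: "\<forall>x. fstar \<le> f x" and eta: "\<eta> \<ge> 0"
    and run: "adasgd_run \<eta> \<gamma> T w g" and noise: "affine_noise_bound \<sigma>0 \<sigma>1 f' T w g"
    and t: "t \<in> {1..T}"
  shows "(norm (g t))\<^sup>2
    \<le> 2 * \<sigma>0\<^sup>2 + 8 * (1 + \<sigma>1\<^sup>2) * (\<eta>\<^sup>2 * \<beta>\<^sup>2 * (real T)\<^sup>2 + \<beta> * (f (w 1) - fstar))"
proof -
  have "(norm (g t))\<^sup>2 \<le> 2 * \<sigma>0\<^sup>2 + 2 * (1 + \<sigma>1\<^sup>2) * (norm (f' (w t)))\<^sup>2"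
    using noise t unfolding affine_noise_bound_def by (blast intro: norm_sq_le_of_affine_noise)
  also have "\<dots> \<le> 2 * \<sigma>0\<^sup>2 + 2 * (1 + \<sigma>1\<^sup>2) * (4 * \<beta> * (f (w 1) - fstar) + 2 * (\<beta> * (\<eta> * real T))\<^sup>2)"
    using beta_smooth_norm_gradient_sq_le_near[OF smooth fmin adasgd_dist_le[OF run eta t]]
    by (intro add_left_mono mult_left_mono) auto
  also have "\<dots> \<le> 2 * \<sigma>0\<^sup>2 + 8 * (1 + \<sigma>1\<^sup>2) * (\<eta>\<^sup>2 * \<beta>\<^sup>2 * (real T)\<^sup>2 + \<beta> * (f (w 1) - fstar))"
    by (simp add: power_mult_distrib algebra_simps)
  finally show ?thesis .
qed

theorem lemma6:
  fixes f :: "'a::euclidean_space \<Rightarrow> real" and f' :: "'a \<Rightarrow> 'a"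
    and \<beta> \<eta> \<gamma> \<sigma>0 \<sigma>1 fstar :: real and T :: nat
    and w g :: "nat \<Rightarrow> 'a"
  assumes smooth: "beta_smooth \<beta> f f'"
    and fmin: "\<forall>x. fstar \<le> f x" and fattained: "\<exists>x. f x = fstar"
    and eta: "\<eta> > 0" and gamma: "\<gamma> > 0"
    and sig0: "\<sigma>0 \<ge> 0" and sig1: "\<sigma>1 \<ge> 0"
    and run: "adasgd_run \<eta> \<gamma> T w g"
    and noise: "affine_noise_bound \<sigma>0 \<sigma>1 f' T w g"
  shows "(\<Sum>t=1..T. (norm (g t))\<^sup>2 / (adasgd_G \<gamma> g t)\<^sup>2)
    \<le> log 2 (1 + (2 * \<sigma>0\<^sup>2 * real T
          + 8 * (1 + \<sigma>1\<^sup>2) * (\<eta>\<^sup>2 * \<beta>\<^sup>2 * real T ^ 3 + \<beta> * (f (w 1) - fstar) * real T))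
        / \<gamma>\<^sup>2)"
proof -
  define S where "S = (\<Sum>s=1..T. (norm (g s))\<^sup>2)"
  define K where "K = 2 * \<sigma>0\<^sup>2 + 8 * (1 + \<sigma>1\<^sup>2) * (\<eta>\<^sup>2 * \<beta>\<^sup>2 * (real T)\<^sup>2 + \<beta> * (f (w 1) - fstar))"
  have S_nonneg: "0 \<le> S / \<gamma>\<^sup>2" unfolding S_def by (simp add: sum_nonneg)
  have "S \<le> real T * K"
    using sum_bounded_above[of "{1..T}" "\<lambda>s. (norm (g s))\<^sup>2" K]
      adasgd_norm_sq_le[OF smooth fmin less_imp_le[OF eta] run noise]
    unfolding S_def K_def by simp
  then have S_le: "S / \<gamma>\<^sup>2 \<le> real T * K / \<gamma>\<^sup>2"
    by (simp add: divide_right_mono)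
  have "(\<Sum>t=1..T. (norm (g t))\<^sup>2 / (adasgd_G \<gamma> g t)\<^sup>2) \<le> ln (1 + S / \<gamma>\<^sup>2)"
    unfolding S_def using gamma by (intro adasgd_sum_ratio_le_ln) simp
  also have "\<dots> \<le> log 2 (1 + S / \<gamma>\<^sup>2)"
    using S_nonneg by (intro ln_le_log_2) simp
  also have "\<dots> \<le> log 2 (1 + real T * K / \<gamma>\<^sup>2)"
    using S_nonneg S_le by simp
  also have "real T * K = 2 * \<sigma>0\<^sup>2 * real T
      + 8 * (1 + \<sigma>1\<^sup>2) * (\<eta>\<^sup>2 * \<beta>\<^sup>2 * real T ^ 3 + \<beta> * (f (w 1) - fstar) * real T)"
    unfolding K_def by (simp add: power2_eq_square power3_eq_cube algebra_simps)
  finally show ?thesis .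
qed

end
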